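(* Let $\iota:\Lambda\hookrightarrow\widetilde{\Lambda}$ be a primitive isometric embedding of the $K3^{[n]}$-lattice into the Mukai lattice, $v$ a generator of $\iota(\Lambda)^\perp$, $\alpha\in\Lambda$ primitive isotropic, $\beta:=\iota(\alpha)$, and $\gamma\in\widetilde{\Lambda}$ with $(\gamma,\beta)=-1$ and $(\gamma,\gamma)=0$. Let $\Lambda_{k3}:=\beta^\perp/\mathbb{Z}\beta$ and let $h$ send an isometry of $\widetilde{\Lambda}$ fixing $\beta$ and $v$ to the induced isometry of $\Lambda_{k3}$. For $z\in\widetilde{\Lambda}$ orthogonal to $\beta$ and $v$ define $\tilde g_z(x):=x-(x,\beta)z+\left[(x,z)-\tfrac12(x,\beta)(z,z)\right]\beta$. Then $\tilde g_z$ is the unique isometry of $\widetilde{\Lambda}$ fixing $\beta$ and $v$, lying in the kernel of $h$, and sending $\gamma$ to an element congruent to $\gamma+z$ modulo $\mathbb{Z}\beta$. Moreover $\tilde g_z$ is orientation preserving.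
   Context: The Mukai lattice $\widetilde{\Lambda}$ is $E_8(-1)^{\oplus2}\oplus U^{\oplus4}$ (even unimodular of signature $(4,20)$); the $K3^{[n]}$-lattice $\Lambda$ ($n\ge2$) is $U^{\oplus3}\oplus E_8(-1)^{\oplus2}\oplus\langle2-2n\rangle$. An isometry is orientation preserving if it preserves the orientation of the positive cone $\{x\in\widetilde{\Lambda}\otimes\mathbb{R}:(x,x)>0\}$, i.e. acts trivially on its $H^2\cong\mathbb{Z}$. *)

theory Defs
  imports "HOL-Analysis.Analysis" "HOL-Library.Function_Algebras"
begin

text \<open>Elements of a rank d lattice are functions nat => int supported on {..<d}.\<close>
definition vecs :: "nat \<Rightarrow> (nat \<Rightarrow> int) set" where
  "vecs d = {x. \<forall>i\<ge>d. x i = 0}"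

definition bil :: "nat \<Rightarrow> (nat \<Rightarrow> nat \<Rightarrow> int) \<Rightarrow> (nat \<Rightarrow> int) \<Rightarrow> (nat \<Rightarrow> int) \<Rightarrow> int" where
  "bil d G x y = (\<Sum>i<d. \<Sum>j<d. x i * G i j * y j)"

text \<open>Cartan matrix of E8 (positive definite): chain 0-1-2-3-4-5-6, node 7 attached to node 2.\<close>
definition e8_adj :: "nat \<Rightarrow> nat \<Rightarrow> bool" where
  "e8_adj i j = ((i < 7 \<and> j < 7 \<and> (i = j + 1 \<or> j = i + 1)) \<or> (i = 2 \<and> j = 7) \<or> (i = 7 \<and> j = 2))"

definition e8 :: "nat \<Rightarrow> nat \<Rightarrow> int" where
  "e8 i j = (if i < 8 \<and> j < 8 then (if i = j then 2 else if e8_adj i j then -1 else 0) else 0)"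

definition hypU :: "nat \<Rightarrow> nat \<Rightarrow> int" where
  "hypU i j = (if (i = 0 \<and> j = 1) \<or> (i = 1 \<and> j = 0) then 1 else 0)"

text \<open>Mukai lattice E8(-1)^2 + U^4, rank 24: indices 0..7, 8..15 for E8(-1), 16..23 for U^4.\<close>
definition mukai_gram :: "nat \<Rightarrow> nat \<Rightarrow> int" where
  "mukai_gram i j =
     (if i < 8 \<and> j < 8 then - e8 i j
      else if 8 \<le> i \<and> i < 16 \<and> 8 \<le> j \<and> j < 16 then - e8 (i - 8) (j - 8)
      else if 16 \<le> i \<and> i < 24 \<and> 16 \<le> j \<and> j < 24 \<and> (i - 16) div 2 = (j - 16) div 2
        then hypU ((i - 16) mod 2) ((j - 16) mod 2)
      else 0)"

text \<open>K3^[n] lattice U^3 + E8(-1)^2 + <2-2n>, rank 23: indices 0..5 for U^3,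
  6..13 and 14..21 for E8(-1), 22 for <2-2n>.\<close>
definition k3n_gram :: "nat \<Rightarrow> nat \<Rightarrow> nat \<Rightarrow> int" where
  "k3n_gram n i j =
     (if i < 6 \<and> j < 6 \<and> i div 2 = j div 2 then hypU (i mod 2) (j mod 2)
      else if 6 \<le> i \<and> i < 14 \<and> 6 \<le> j \<and> j < 14 then - e8 (i - 6) (j - 6)
      else if 14 \<le> i \<and> i < 22 \<and> 14 \<le> j \<and> j < 22 then - e8 (i - 14) (j - 14)
      else if i = 22 \<and> j = 22 then 2 - 2 * int n
      else 0)"

abbreviation mukai :: "(nat \<Rightarrow> int) \<Rightarrow> (nat \<Rightarrow> int) \<Rightarrow> int" where
  "mukai \<equiv> bil 24 mukai_gram"

abbreviation k3n :: "nat \<Rightarrow> (nat \<Rightarrow> int) \<Rightarrow> (nat \<Rightarrow> int) \<Rightarrow> int" where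
  "k3n n \<equiv> bil 23 (k3n_gram n)"

definition zscale :: "int \<Rightarrow> (nat \<Rightarrow> int) \<Rightarrow> (nat \<Rightarrow> int)" where
  "zscale m y = (\<lambda>i. m * y i)"

definition primitive_elem :: "nat \<Rightarrow> (nat \<Rightarrow> int) \<Rightarrow> bool" where
  "primitive_elem d a \<longleftrightarrow> a \<in> vecs d \<and> a \<noteq> 0 \<and>
     (\<forall>m y. y \<in> vecs d \<and> a = zscale m y \<longrightarrow> \<bar>m\<bar> = 1)"

definition isometric_embedding ::
  "nat \<Rightarrow> (nat \<Rightarrow> nat \<Rightarrow> int) \<Rightarrow> nat \<Rightarrow> (nat \<Rightarrow> nat \<Rightarrow> int) \<Rightarrow> ((nat \<Rightarrow> int) \<Rightarrow> (nat \<Rightarrow> int)) \<Rightarrow> bool" where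
  "isometric_embedding d G e H f \<longleftrightarrow>
     (\<forall>x\<in>vecs d. f x \<in> vecs e) \<and>
     (\<forall>x\<in>vecs d. \<forall>y\<in>vecs d. f (x + y) = f x + f y) \<and>
     (\<forall>m. \<forall>x\<in>vecs d. f (zscale m x) = zscale m (f x)) \<and>
     (\<forall>x\<in>vecs d. \<forall>y\<in>vecs d. bil e H (f x) (f y) = bil d G x y)"

definition primitive_embedding ::
  "nat \<Rightarrow> (nat \<Rightarrow> nat \<Rightarrow> int) \<Rightarrow> nat \<Rightarrow> (nat \<Rightarrow> nat \<Rightarrow> int) \<Rightarrow> ((nat \<Rightarrow> int) \<Rightarrow> (nat \<Rightarrow> int)) \<Rightarrow> bool" where
  "primitive_embedding d G e H f \<longleftrightarrow> isometric_embedding d G e H f \<and>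
     (\<forall>m y. m \<noteq> 0 \<and> y \<in> vecs e \<and> zscale m y \<in> f ` vecs d \<longrightarrow> y \<in> f ` vecs d)"

definition mukai_isometry :: "((nat \<Rightarrow> int) \<Rightarrow> (nat \<Rightarrow> int)) \<Rightarrow> bool" where
  "mukai_isometry g \<longleftrightarrow> bij_betw g (vecs 24) (vecs 24) \<and>
     (\<forall>x\<in>vecs 24. \<forall>y\<in>vecs 24. g (x + y) = g x + g y) \<and>
     (\<forall>x\<in>vecs 24. \<forall>y\<in>vecs 24. mukai (g x) (g y) = mukai x y)"

text \<open>g lies in the kernel of h: the induced map on beta^perp / Z beta is the identity.\<close>
definition trivial_on_k3 :: "(nat \<Rightarrow> int) \<Rightarrow> ((nat \<Rightarrow> int) \<Rightarrow> (nat \<Rightarrow> int)) \<Rightarrow> bool" where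
  "trivial_on_k3 \<beta> g \<longleftrightarrow> (\<forall>x\<in>vecs 24. mukai x \<beta> = 0 \<longrightarrow> (\<exists>k. g x - x = zscale k \<beta>))"

text \<open>The map tilde g_z. The Mukai lattice is even, so (z,z) div 2 is exact.\<close>
definition gtilde :: "(nat \<Rightarrow> int) \<Rightarrow> (nat \<Rightarrow> int) \<Rightarrow> (nat \<Rightarrow> int) \<Rightarrow> (nat \<Rightarrow> int)" where
  "gtilde \<beta> z x = x - zscale (mukai x \<beta>) z + zscale (mukai x z - mukai x \<beta> * (mukai z z div 2)) \<beta>"

definition mukaiR :: "(nat \<Rightarrow> real) \<Rightarrow> (nat \<Rightarrow> real) \<Rightarrow> real" where
  "mukaiR x y = (\<Sum>i<24. \<Sum>j<24. x i * real_of_int (mukai_gram i j) * y j)"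

definition vecsR :: "nat \<Rightarrow> (nat \<Rightarrow> real) set" where
  "vecsR d = {x. \<forall>i\<ge>d. x i = 0}"

definition unitv :: "nat \<Rightarrow> nat \<Rightarrow> int" where
  "unitv i = (\<lambda>j. if j = i then 1 else 0)"

definition realext :: "((nat \<Rightarrow> int) \<Rightarrow> (nat \<Rightarrow> int)) \<Rightarrow> (nat \<Rightarrow> real) \<Rightarrow> (nat \<Rightarrow> real)" where
  "realext g x = (\<lambda>j. \<Sum>i<24. x i * real_of_int (g (unitv i) j))"

text \<open>Orientation preserving: g preserves the orientation of positive definite 4-spaces in
  the Mukai lattice tensor R, i.e. for every frame p of a positive 4-space P the map
  P -> P, x |-> proj_P (g x) has positive determinant; equivalently det((g p_a, p_b)) > 0.\<close>
definition orientation_preserving :: "((nat \<Rightarrow> int) \<Rightarrow> (nat \<Rightarrow> int)) \<Rightarrow> bool" where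
  "orientation_preserving g \<longleftrightarrow>
     (\<forall>p :: 4 \<Rightarrow> (nat \<Rightarrow> real).
        (\<forall>a. p a \<in> vecsR 24) \<and>
        (\<forall>c :: real ^ 4. c \<noteq> 0 \<longrightarrow> (\<Sum>a\<in>UNIV. \<Sum>b\<in>UNIV. c $ a * c $ b * mukaiR (p a) (p b)) > 0)
        \<longrightarrow> det (\<chi> a b. mukaiR (realext g (p a)) (p b)) > 0)"

end

theory Submission
  imports Defs
begin

text \<open>The map \<open>gtilde\<close> is the Eichler transvection \<open>E(\<beta>, z)\<close>; since \<open>\<beta>\<close> is isotropic and
  orthogonal to \<open>z\<close>, it is an isometry with inverse \<open>E(\<beta>, -z)\<close>, it fixes \<open>v\<close>, and it
  moves every element of \<open>\<beta>\<^sup>\<perp>\<close> by a multiple of \<open>\<beta>\<close>. Since \<open>\<beta>\<^sup>\<perp>\<close> and \<open>\<gamma>\<close> span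
  the lattice, an isometry acting trivially on \<open>\<beta>\<^sup>\<perp>/\<int>\<beta>\<close> is determined by \<open>g \<gamma>\<close>, and
  the two remaining multiples of \<open>\<beta>\<close> are forced by the isometry condition.

  For the orientation, \<open>t \<mapsto> E(\<beta>, t z)\<close> connects the identity to \<open>gtilde\<close> through real
  isometries. For a positive definite 4-frame \<open>p\<close>, the matrix \<open>((E p\<^sub>a, p\<^sub>b))\<close> stays
  invertible along the path, because the Mukai form has positive index 4: a vector of
  \<open>span p\<close> sent into \<open>p\<^sup>\<perp>\<close> would have nonpositive square. So its determinant keeps the
  sign of the Gram matrix of \<open>p\<close>, which is positive.\<close>

section \<open>The Mukai form over an arbitrary ring\<close>

definition mukai_form :: "(nat \<Rightarrow> 'a::comm_ring_1) \<Rightarrow> (nat \<Rightarrow> 'a) \<Rightarrow> 'a" where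
  "mukai_form x y = (\<Sum>i<24. \<Sum>j<24. x i * of_int (mukai_gram i j) * y j)"

lemma mukai_eq_mukai_form: "mukai x y = mukai_form x y"
  by (simp add: bil_def mukai_form_def)

lemma mukaiR_eq_mukai_form: "mukaiR x y = mukai_form x y"
  by (simp add: mukaiR_def mukai_form_def)

lemma sum_lessThan_24:
  "(\<Sum>i<(24::nat). f i) = f 0 + f 1 + f 2 + f 3 + f 4 + f 5 + f 6 + f 7 + f 8 + f 9 + f 10 + f 11
     + f 12 + f 13 + f 14 + f 15 + f 16 + f 17 + f 18 + f 19 + f 20 + f 21 + f 22 + (f 23 :: 'a::comm_monoid_add)"
  by (simp add: eval_nat_numeral sum.lessThan_Suc add.assoc)

lemma mukai_form_expand:
  "mukai_form x y =
     - 2 * x 0 * y 0 - 2 * x 1 * y 1 - 2 * x 2 * y 2 - 2 * x 3 * y 3 - 2 * x 4 * y 4 - 2 * x 5 * y 5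
     - 2 * x 6 * y 6 - 2 * x 7 * y 7 + x 0 * y 1 + x 1 * y 0 + x 1 * y 2 + x 2 * y 1 + x 2 * y 3
     + x 3 * y 2 + x 3 * y 4 + x 4 * y 3 + x 4 * y 5 + x 5 * y 4 + x 5 * y 6 + x 6 * y 5 + x 2 * y 7
     + x 7 * y 2
     - 2 * x 8 * y 8 - 2 * x 9 * y 9 - 2 * x 10 * y 10 - 2 * x 11 * y 11 - 2 * x 12 * y 12
     - 2 * x 13 * y 13 - 2 * x 14 * y 14 - 2 * x 15 * y 15 + x 8 * y 9 + x 9 * y 8 + x 9 * y 10
     + x 10 * y 9 + x 10 * y 11 + x 11 * y 10 + x 11 * y 12 + x 12 * y 11 + x 12 * y 13 + x 13 * y 12
     + x 13 * y 14 + x 14 * y 13 + x 10 * y 15 + x 15 * y 10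
     + x 16 * y 17 + x 17 * y 16 + x 18 * y 19 + x 19 * y 18 + x 20 * y 21 + x 21 * y 20
     + x 22 * y 23 + (x 23 * y 22 :: 'a::comm_ring_1)"
  unfolding mukai_form_def sum_lessThan_24
  by (simp add: mukai_gram_def e8_def e8_adj_def hypU_def algebra_simps)

lemma mukai_form_sym: "mukai_form x y = mukai_form y x"
  unfolding mukai_form_expand by (simp add: algebra_simps)

lemma mukai_form_add_left: "mukai_form (\<lambda>i. x i + y i) w = mukai_form x w + mukai_form y w"
  and mukai_form_diff_left: "mukai_form (\<lambda>i. x i - y i) w = mukai_form x w - mukai_form y w"
  and mukai_form_scale_left: "mukai_form (\<lambda>i. c * x i) w = c * mukai_form x w"
  and mukai_form_add_right: "mukai_form w (\<lambda>i. x i + y i) = mukai_form w x + mukai_form w y"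
  and mukai_form_diff_right: "mukai_form w (\<lambda>i. x i - y i) = mukai_form w x - mukai_form w y"
  and mukai_form_scale_right: "mukai_form w (\<lambda>i. c * x i) = c * mukai_form w x"
  unfolding mukai_form_expand by (simp_all add: algebra_simps)

lemmas mukai_form_bilinear = mukai_form_add_left mukai_form_diff_left mukai_form_scale_left
  mukai_form_add_right mukai_form_diff_right mukai_form_scale_right

lemma mukai_form_neg_left: "mukai_form (\<lambda>i. - x i) w = - mukai_form x w"
  using mukai_form_scale_left[of "-1" x w] by simp

lemma mukai_form_neg_right: "mukai_form w (\<lambda>i. - x i) = - mukai_form w x"
  using mukai_form_scale_right[of w "-1" x] by simp

lemma mukai_form_sum_left:
  "finite A \<Longrightarrow> mukai_form (\<lambda>i. \<Sum>a\<in>A. c a * p a i) y = (\<Sum>a\<in>A. c a * mukai_form (p a) y)"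
  unfolding mukai_form_def by (simp add: sum_distrib_right sum_distrib_left sum.swap[of _ A] mult.assoc)

lemma mukai_form_sum_sum:
  fixes p :: "'n::finite \<Rightarrow> nat \<Rightarrow> 'a::comm_ring_1"
  shows "mukai_form (\<lambda>i. \<Sum>a\<in>UNIV. x a * p a i) (\<lambda>i. \<Sum>a\<in>UNIV. x a * p a i)
           = (\<Sum>a\<in>UNIV. \<Sum>b\<in>UNIV. x a * x b * mukai_form (p a) (p b))"
    (is "mukai_form ?u ?u = _")
proof -
  have left: "mukai_form ?u y = (\<Sum>a\<in>UNIV. x a * mukai_form (p a) y)" for y
    by (simp add: mukai_form_sum_left)
  have "mukai_form ?u ?u = (\<Sum>a\<in>UNIV. x a * mukai_form ?u (p a))"
    unfolding left[of ?u] by (simp add: mukai_form_sym[of _ ?u])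
  also have "\<dots> = (\<Sum>a\<in>UNIV. \<Sum>b\<in>UNIV. x a * x b * mukai_form (p a) (p b))"
    unfolding left by (simp add: sum_distrib_left mukai_form_sym[of "p _" "p _"] algebra_simps)
  finally show ?thesis .
qed

lemma mukai_form_cong_left: "(\<And>i. i < 24 \<Longrightarrow> x i = x' i) \<Longrightarrow> mukai_form x y = mukai_form x' y"
  unfolding mukai_form_def by simp

lemma mukai_form_of_int:
  "mukai_form (\<lambda>i. of_int (x i)) (\<lambda>i. of_int (y i)) = (of_int (mukai_form x y) :: 'a::comm_ring_1)"
  unfolding mukai_form_expand by simp

lemma mukai_form_even: "even (mukai_form (x :: nat \<Rightarrow> int) x)"
  unfolding mukai_form_def sum_lessThan_24
  by (simp add: mukai_gram_def e8_def e8_adj_def hypU_def algebra_simps)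

section \<open>Eichler transvections\<close>

text \<open>The parameter \<open>c\<close> stands for \<open>(z, z)/2\<close>, which keeps the map integral.\<close>
definition eichler :: "(nat \<Rightarrow> 'a::comm_ring_1) \<Rightarrow> (nat \<Rightarrow> 'a) \<Rightarrow> 'a \<Rightarrow> (nat \<Rightarrow> 'a) \<Rightarrow> nat \<Rightarrow> 'a" where
  "eichler b z c x = (\<lambda>i. x i - mukai_form x b * z i + (mukai_form x z - mukai_form x b * c) * b i)"

lemma eichler_form_left:
  "mukai_form (eichler b z c x) w
     = mukai_form x w - mukai_form x b * mukai_form z w + (mukai_form x z - mukai_form x b * c) * mukai_form b w"
  unfolding eichler_def by (simp add: mukai_form_bilinear)

lemma eichler_isometric:
  assumes "mukai_form b b = 0" "mukai_form z b = 0" "mukai_form z z = 2 * c"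
  shows "mukai_form (eichler b z c x) (eichler b z c y) = mukai_form x y"
proof -
  have right: "mukai_form w (eichler b z c y)
      = mukai_form w y - mukai_form y b * mukai_form w z + (mukai_form y z - mukai_form y b * c) * mukai_form w b" for w
    using eichler_form_left[of b z c y w] by (simp add: mukai_form_sym[of w])
  show ?thesis
    unfolding eichler_form_left right
    using assms mukai_form_sym[of b z] mukai_form_sym[of b x] mukai_form_sym[of b y]
      mukai_form_sym[of z x] mukai_form_sym[of z y] mukai_form_sym[of x y]
    by (simp add: algebra_simps)
qed

lemma eichler_neg_inverse:
  assumes "mukai_form b b = 0" "mukai_form z b = 0" "mukai_form z z = 2 * c"
  shows "eichler b (\<lambda>i. - z i) c (eichler b z c x) = x"
  using assms mukai_form_sym[of b z]
  by (simp add: eichler_def[of b "\<lambda>i. - z i"] eichler_form_left mukai_form_neg_left mukai_form_neg_right)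
     (simp add: eichler_def fun_eq_iff algebra_simps)

lemma eichler_add: "eichler b z c (\<lambda>i. x i + y i) = (\<lambda>i. eichler b z c x i + eichler b z c y i)"
  unfolding eichler_def by (simp add: mukai_form_bilinear fun_eq_iff algebra_simps)

lemma eichler_sum:
  assumes "finite A"
  shows "eichler b z c (\<lambda>i. \<Sum>a\<in>A. x a * p a i) = (\<lambda>i. \<Sum>a\<in>A. x a * eichler b z c (p a) i)"
  unfolding eichler_def using assms
  by (simp add: mukai_form_sum_left sum_subtractf sum.distrib sum_distrib_left sum_distrib_right
      fun_eq_iff algebra_simps)

lemma eichler_zero [simp]: "eichler b (\<lambda>i. 0) 0 x = x"
  by (simp add: eichler_def mukai_form_def)

section \<open>The positive index of the Mukai form\<close>

lemma e8_quadratic_nonneg: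
  fixes y0 y1 y2 y3 y4 y5 y6 y7 :: real
  shows "0 \<le> 2 * (y0*y0 + y1*y1 + y2*y2 + y3*y3 + y4*y4 + y5*y5 + y6*y6 + y7*y7)
              - 2 * (y0*y1 + y1*y2 + y2*y3 + y3*y4 + y4*y5 + y5*y6 + y2*y7)"
proof -
  have "2 * (y0*y0 + y1*y1 + y2*y2 + y3*y3 + y4*y4 + y5*y5 + y6*y6 + y7*y7)
          - 2 * (y0*y1 + y1*y2 + y2*y3 + y3*y4 + y4*y5 + y5*y6 + y2*y7)
      = 2*(y0 - y1/2)^2 + 3/2*(y1 - 2/3*y2)^2 + 2*(y6 - y5/2)^2 + 3/2*(y5 - 2/3*y4)^2
        + 4/3*(y4 - 3/4*y3)^2 + 5/4*(y3 - 4/5*y2)^2 + 2*(y7 - y2/2)^2 + 1/30*y2^2"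
    by (simp add: power2_eq_square algebra_simps)
  also have "\<dots> \<ge> 0"
    by (intro add_nonneg_nonneg mult_nonneg_nonneg) auto
  finally show ?thesis .
qed

text \<open>The conditions cut out the negative line in each of the four copies of \<open>U\<close>, so they
  describe a codimension 4 subspace on which the form is negative semidefinite.\<close>
lemma mukai_form_nonpos_on_negative_subspace:
  fixes u :: "nat \<Rightarrow> real"
  assumes "u 17 = - u 16" "u 19 = - u 18" "u 21 = - u 20" "u 23 = - u 22"
  shows "mukai_form u u \<le> 0"
proof -
  define q1 where "q1 = 2 * (u 0 * u 0 + u 1 * u 1 + u 2 * u 2 + u 3 * u 3 + u 4 * u 4 + u 5 * u 5
      + u 6 * u 6 + u 7 * u 7) - 2 * (u 0 * u 1 + u 1 * u 2 + u 2 * u 3 + u 3 * u 4 + u 4 * u 5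
      + u 5 * u 6 + u 2 * u 7)"
  define q2 where "q2 = 2 * (u 8 * u 8 + u 9 * u 9 + u 10 * u 10 + u 11 * u 11 + u 12 * u 12
      + u 13 * u 13 + u 14 * u 14 + u 15 * u 15) - 2 * (u 8 * u 9 + u 9 * u 10 + u 10 * u 11
      + u 11 * u 12 + u 12 * u 13 + u 13 * u 14 + u 10 * u 15)"
  define s where "s = u 16 * u 16 + u 18 * u 18 + u 20 * u 20 + u 22 * u 22"
  have "mukai_form u u = - q1 - q2 - 2 * s"
    unfolding q1_def q2_def s_def by (simp add: mukai_form_expand assms algebra_simps)
  moreover have "0 \<le> q1" "0 \<le> q2"
    unfolding q1_def q2_def by (rule e8_quadratic_nonneg)+
  moreover have "0 \<le> s"
    unfolding s_def by simp
  ultimately show ?thesis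
    by linarith
qed

lemma linear_nontrivial_kernel:
  fixes f :: "'a::euclidean_space \<Rightarrow> 'b::euclidean_space"
  assumes "linear f" "DIM('b) < DIM('a)"
  obtains x where "x \<noteq> 0" "f x = 0"
proof -
  have "\<not> inj f"
  proof
    assume "inj f"
    then have "dim (f ` UNIV) = dim (UNIV :: 'a set)"
      using dim_image_eq[OF assms(1)] by (metis inj_on_subset subset_UNIV)
    moreover have "dim (f ` UNIV) \<le> DIM('b)"
      by (rule dim_subset_UNIV)
    ultimately show False
      using assms(2) by simp
  qed
  then show ?thesis
    using linear_injective_0[OF assms(1)] that by auto
qed

text \<open>The Mukai form has positive index 4: a nonzero combination of the frame and \<open>w\<close> lies in
  the negative subspace, which is impossible if \<open>w\<close> has positive square.\<close>
lemma mukai_form_nonpos_on_orthogonal: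
  fixes p :: "4 \<Rightarrow> nat \<Rightarrow> real" and w :: "nat \<Rightarrow> real"
  assumes pos_def: "\<And>c::real^4. c \<noteq> 0 \<Longrightarrow> (\<Sum>a\<in>UNIV. \<Sum>b\<in>UNIV. c$a * c$b * mukai_form (p a) (p b)) > 0"
    and orth: "\<And>a. mukai_form (p a) w = 0"
  shows "mukai_form w w \<le> 0"
proof (rule ccontr)
  assume "\<not> ?thesis"
  then have w_pos: "mukai_form w w > 0" by simp
  define U where "U = (\<lambda>(c :: real^4, d :: real) i. (\<Sum>a\<in>UNIV. c $ a * p a i) + d * w i)"
  define F where "F = (\<lambda>cd. (U cd 16 + U cd 17, U cd 18 + U cd 19, U cd 20 + U cd 21, U cd 22 + U cd 23))"
  have "linear F"
    unfolding F_def U_def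
    by (intro linearI) (auto simp: algebra_simps sum.distrib sum_distrib_left)
  moreover have "DIM(real \<times> real \<times> real \<times> real) < DIM((real^4) \<times> real)"
    by simp
  ultimately obtain cd where "cd \<noteq> 0" "F cd = 0"
    by (rule linear_nontrivial_kernel)
  then obtain c d where cd: "(c, d) \<noteq> 0" "F (c, d) = 0"
    by (cases cd) auto
  define A where "A = (\<lambda>i. \<Sum>a\<in>UNIV. c $ a * p a i)"
  have U_cd: "U (c, d) = (\<lambda>i. A i + d * w i)"
    by (simp add: U_def A_def)
  have A_w: "mukai_form A w = 0"
    unfolding A_def by (simp add: mukai_form_sum_left orth)
  have "mukai_form A A + d * d * mukai_form w w = mukai_form (U (c, d)) (U (c, d))"
    unfolding U_cd by (simp add: mukai_form_bilinear mukai_form_sym[of w A] A_w)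
  also have "\<dots> \<le> 0"
    using cd(2) by (intro mukai_form_nonpos_on_negative_subspace) (auto simp: F_def zero_prod_def)
  finally have "mukai_form A A + d * d * mukai_form w w \<le> 0" .
  moreover have "mukai_form A A = (\<Sum>a\<in>UNIV. \<Sum>b\<in>UNIV. c$a * c$b * mukai_form (p a) (p b))"
    unfolding A_def by (rule mukai_form_sum_sum)
  moreover have "c \<noteq> 0 \<or> d * d > 0"
    using cd(1) by (auto simp: zero_prod_def) (metis not_real_square_gt_zero)
  ultimately show False
    using pos_def[of c] w_pos mult_pos_pos[OF _ w_pos, of "d * d"] by fastforce
qed

section \<open>Determinants along paths of isometries\<close>

lemma continuous_on_det:
  fixes F :: "real \<Rightarrow> real^'n^'n"
  assumes "\<And>i j. continuous_on S (\<lambda>t. F t $ i $ j)"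
  shows "continuous_on S (\<lambda>t. det (F t))"
  unfolding det_def by (intro continuous_intros assms)

lemma det_pos_along_path:
  fixes F :: "real \<Rightarrow> real^'n^'n"
  assumes "continuous_on {0..1} (\<lambda>t. det (F t))" "\<And>t. t \<in> {0..1} \<Longrightarrow> det (F t) \<noteq> 0"
    and "det (F 0) > 0"
  shows "det (F 1) > 0"
proof (rule ccontr)
  assume "\<not> ?thesis"
  then obtain t where "0 \<le> t" "t \<le> 1" "det (F t) = 0"
    using IVT2'[of "\<lambda>t. det (F t)" 1 0 0] assms(1,3) by auto
  then show False
    using assms(2) by auto
qed

lemma det_nonzero_if_ker_trivial:
  fixes A :: "real^'n^'n"
  assumes "\<And>x. A *v x = 0 \<Longrightarrow> x = 0"
  shows "det A \<noteq> 0"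
proof -
  have "inj ((*v) A)"
    using assms linear_injective_0[OF matrix_vector_mul_linear[of A]] by blast
  then show ?thesis
    using det_nz_iff_inj[OF matrix_vector_mul_linear[of A]] by simp
qed

lemma det_pos_if_positive_definite:
  fixes Q :: "real^'n^'n"
  assumes pos_def: "\<And>x. x \<noteq> 0 \<Longrightarrow> x \<bullet> (Q *v x) > 0"
  shows "det Q > 0"
proof -
  define F where "F s = (1 - s) *\<^sub>R mat 1 + s *\<^sub>R Q" for s :: real
  have quadratic: "x \<bullet> (F s *v x) = (1 - s) * (x \<bullet> x) + s * (x \<bullet> (Q *v x))" for s x
    by (simp add: F_def matrix_vector_mult_add_rdistrib scaleR_matrix_vector_assoc[symmetric] inner_add_right)
  have "det (F 1) > 0"
  proof (rule det_pos_along_path)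
    show "continuous_on {0..1} (\<lambda>s. det (F s))"
      by (intro continuous_on_det) (simp add: F_def continuous_intros)
    show "det (F 0) > 0"
      by (simp add: F_def)
  next
    fix s :: real
    assume s: "s \<in> {0..1}"
    show "det (F s) \<noteq> 0"
    proof (rule det_nonzero_if_ker_trivial, rule ccontr)
      fix x
      assume "F s *v x = 0" "x \<noteq> 0"
      then have "(1 - s) * (x \<bullet> x) + s * (x \<bullet> (Q *v x)) = 0" and "x \<bullet> x > 0" "x \<bullet> (Q *v x) > 0"
        using pos_def quadratic[of x s] by auto
      with s show False
        by (smt (verit) atLeastAtMost_iff mult_nonneg_nonneg mult_pos_pos)
    qed
  qed
  then show ?thesis
    by (simp add: F_def)
qed

lemma inner_mukai_gram_matrix:
  fixes p :: "'n::finite \<Rightarrow> nat \<Rightarrow> real"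
  shows "x \<bullet> ((\<chi> a b. mukai_form (p a) (p b)) *v x)
           = (\<Sum>a\<in>UNIV. \<Sum>b\<in>UNIV. x$a * x$b * mukai_form (p a) (p b))"
  by (simp add: inner_vec_def matrix_vector_mult_def sum_distrib_left algebra_simps)

text \<open>A kernel vector gives \<open>u\<close> in the span of the frame with \<open>E u\<close> orthogonal to the
  frame, hence \<open>0 < (u, u) = (E u, E u) \<le> 0\<close>.\<close>
lemma det_eichler_gram_nonzero:
  fixes p :: "4 \<Rightarrow> nat \<Rightarrow> real"
  assumes pos_def: "\<And>x::real^4. x \<noteq> 0 \<Longrightarrow> (\<Sum>a\<in>UNIV. \<Sum>b\<in>UNIV. x$a * x$b * mukai_form (p a) (p b)) > 0"
    and bz: "mukai_form b b = 0" "mukai_form z b = 0" "mukai_form z z = 2 * c"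
  shows "det (\<chi> a a'. mukai_form (eichler b z c (p a)) (p a')) \<noteq> 0" (is "det ?M \<noteq> 0")
proof -
  have "det (transpose ?M) \<noteq> 0"
  proof (rule det_nonzero_if_ker_trivial, rule ccontr)
    fix x :: "real^4"
    assume ker: "transpose ?M *v x = 0" and "x \<noteq> 0"
    define u where "u = (\<lambda>i. \<Sum>a\<in>UNIV. x$a * p a i)"
    have "mukai_form (p a') (eichler b z c u) = (transpose ?M *v x) $ a'" for a'
      by (simp add: u_def eichler_sum mukai_form_sum_left mukai_form_sym[of "p a'"]
          transpose_def matrix_vector_mult_def mult.commute)
    then have "mukai_form (eichler b z c u) (eichler b z c u) \<le> 0"
      using ker by (intro mukai_form_nonpos_on_orthogonal[OF pos_def]) auto
    moreover have "mukai_form (eichler b z c u) (eichler b z c u)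
        = (\<Sum>a\<in>UNIV. \<Sum>b\<in>UNIV. x$a * x$b * mukai_form (p a) (p b))"
      unfolding eichler_isometric[OF bz] u_def by (rule mukai_form_sum_sum)
    ultimately show False
      using pos_def \<open>x \<noteq> 0\<close> by fastforce
  qed
  then show ?thesis
    by simp
qed

lemma det_eichler_gram_pos:
  fixes p :: "4 \<Rightarrow> nat \<Rightarrow> real"
  assumes pos_def: "\<And>x::real^4. x \<noteq> 0 \<Longrightarrow> (\<Sum>a\<in>UNIV. \<Sum>b\<in>UNIV. x$a * x$b * mukai_form (p a) (p b)) > 0"
    and "mukai_form b b = 0" "mukai_form z b = 0" "mukai_form z z = 2 * c"
  shows "det (\<chi> a a'. mukai_form (eichler b z c (p a)) (p a')) > 0"
proof -
  define F where
    "F t = (\<chi> a a'. mukai_form (eichler b (\<lambda>i. t * z i) (t * t * c) (p a)) (p a'))" for t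
  have entry: "F t $ a $ a' = mukai_form (p a) (p a') - t * mukai_form (p a) b * mukai_form z (p a')
      + (t * mukai_form (p a) z - t * t * c * mukai_form (p a) b) * mukai_form b (p a')" for t a a'
    by (simp add: F_def eichler_form_left mukai_form_scale_left mukai_form_scale_right algebra_simps)
  have "det (F 1) > 0"
  proof (rule det_pos_along_path)
    show "continuous_on {0..1} (\<lambda>t. det (F t))"
      by (intro continuous_on_det) (simp add: entry continuous_intros)
    show "det (F 0) > 0"
      using pos_def by (simp add: F_def det_pos_if_positive_definite inner_mukai_gram_matrix)
    show "det (F t) \<noteq> 0" for t
      unfolding F_def using assms
      by (intro det_eichler_gram_nonzero) (simp_all add: mukai_form_scale_left mukai_form_scale_right)
  qed
  then show ?thesis
    by (simp add: F_def)
qed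

lemma gtilde_eq_eichler: "gtilde b z = eichler b z (mukai z z div 2)"
  by (simp add: gtilde_def eichler_def zscale_def mukai_eq_mukai_form fun_eq_iff)

lemma eichler_in_vecs: "b \<in> vecs d \<Longrightarrow> z \<in> vecs d \<Longrightarrow> x \<in> vecs d \<Longrightarrow> eichler b z c x \<in> vecs d"
  by (simp add: vecs_def eichler_def)

lemma mukai_isometry_eichler:
  assumes vecs: "b \<in> vecs 24" "z \<in> vecs 24"
    and bz: "mukai_form b b = 0" "mukai_form z b = 0" "mukai_form z z = 2 * c"
  shows "mukai_isometry (eichler b z c)"
  unfolding mukai_isometry_def mukai_eq_mukai_form
proof (intro conjI ballI)
  have neg_z: "(\<lambda>i. - z i) \<in> vecs 24" "mukai_form (\<lambda>i. - z i) b = 0"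
    "mukai_form (\<lambda>i. - z i) (\<lambda>i. - z i) = 2 * c"
    using vecs(2) bz by (simp_all add: vecs_def mukai_form_neg_left mukai_form_neg_right)
  show "bij_betw (eichler b z c) (vecs 24) (vecs 24)"
  proof (rule bij_betw_byWitness[where f' = "eichler b (\<lambda>i. - z i) c"])
    show "\<forall>x\<in>vecs 24. eichler b (\<lambda>i. - z i) c (eichler b z c x) = x"
      using eichler_neg_inverse[OF bz] by blast
    show "\<forall>x\<in>vecs 24. eichler b z c (eichler b (\<lambda>i. - z i) c x) = x"
      using eichler_neg_inverse[OF bz(1) neg_z(2,3)] by simp
    show "eichler b z c ` vecs 24 \<subseteq> vecs 24" "eichler b (\<lambda>i. - z i) c ` vecs 24 \<subseteq> vecs 24"
      using vecs neg_z(1) by (auto intro: eichler_in_vecs)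
  qed
  show "eichler b z c (x + y) = eichler b z c x + eichler b z c y" for x y
    using eichler_add[of b z c x y] by (simp add: plus_fun_def)
  show "mukai_form (eichler b z c x) (eichler b z c y) = mukai_form x y" for x y
    by (rule eichler_isometric[OF bz])
qed

lemma eichler_fixes: "mukai_form w b = 0 \<Longrightarrow> mukai_form w z = 0 \<Longrightarrow> eichler b z c w = w"
  by (simp add: eichler_def)

lemma trivial_on_k3_eichler: "trivial_on_k3 b (eichler b z c)"
  unfolding trivial_on_k3_def
proof (intro ballI impI)
  fix x :: "nat \<Rightarrow> int"
  assume "mukai x b = 0"
  then show "\<exists>k. eichler b z c x - x = zscale k b"
    by (intro exI[of _ "mukai_form x z"]) (simp add: eichler_def zscale_def fun_eq_iff mukai_eq_mukai_form)
qed

lemma eichler_shift: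
  assumes "mukai_form \<gamma> b = -1"
  shows "eichler b z c \<gamma> - (\<gamma> + z) = zscale (mukai_form \<gamma> z + c) b"
  using assms by (simp add: eichler_def zscale_def fun_eq_iff algebra_simps)

lemma additive_zscale:
  assumes add: "\<forall>x\<in>vecs d. \<forall>y\<in>vecs d. g (x + y) = g x + g y" and y: "y \<in> vecs d"
  shows "g (zscale m y) = zscale m (g y)"
proof -
  have zscale_vecs: "zscale k y \<in> vecs d" for k
    using y by (simp add: vecs_def zscale_def)
  have "(0 :: nat \<Rightarrow> int) \<in> vecs d"
    by (simp add: vecs_def)
  then have "g (0 + 0) = g 0 + g 0"
    using add by blast
  then have g_zero: "g 0 = 0"
    by simp
  have nat: "g (zscale (int n) y) = zscale (int n) (g y)" for n
  proof (induction n)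
    case 0
    then show ?case
      using g_zero by (simp add: zscale_def zero_fun_def)
  next
    case (Suc n)
    have "zscale (int (Suc n)) y = zscale (int n) y + y"
      by (simp add: zscale_def fun_eq_iff algebra_simps)
    then have "g (zscale (int (Suc n)) y) = g (zscale (int n) y) + g y"
      using add zscale_vecs y by simp
    then show ?case
      using Suc by (simp add: zscale_def fun_eq_iff algebra_simps)
  qed
  show ?thesis
  proof (cases "m \<ge> 0")
    case True
    then show ?thesis
      using nat[of "nat m"] by simp
  next
    case False
    define n where "n = nat (- m)"
    have m: "m = - int n"
      using False by (simp add: n_def)
    have "zscale m y + zscale (int n) y = 0"
      by (simp add: m zscale_def fun_eq_iff)
    then have "g (zscale m y) + g (zscale (int n) y) = 0"
      using add zscale_vecs g_zero by metis
    then have "g (zscale m y) = - zscale (int n) (g y)"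
      using nat[of n] by (simp add: eq_neg_iff_add_eq_0)
    then show ?thesis
      by (simp add: m zscale_def fun_eq_iff)
  qed
qed

text \<open>The vector \<open>x + (x, b) \<gamma>\<close> is orthogonal to \<open>b\<close>, so \<open>g\<close> moves it by a multiple
  \<open>m b\<close>; comparing \<open>(g x', g \<gamma>)\<close> with \<open>(x', \<gamma>)\<close> and \<open>(g \<gamma>, g \<gamma>)\<close> with \<open>(\<gamma>, \<gamma>)\<close>
  determines \<open>m\<close> and \<open>k\<close>.\<close>
lemma eichler_unique:
  fixes g :: "(nat \<Rightarrow> int) \<Rightarrow> nat \<Rightarrow> int"
  assumes g: "mukai_isometry g" "trivial_on_k3 b g" "g \<gamma> - (\<gamma> + z) = zscale k b"
    and \<gamma>: "\<gamma> \<in> vecs 24" "mukai_form \<gamma> b = -1"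
    and bz: "mukai_form b b = 0" "mukai_form z b = 0" "mukai_form z z = 2 * c"
    and x: "x \<in> vecs 24"
  shows "g x = eichler b z c x"
proof -
  have add: "\<forall>x\<in>vecs 24. \<forall>y\<in>vecs 24. g (x + y) = g x + g y"
    and iso: "\<And>x y. x \<in> vecs 24 \<Longrightarrow> y \<in> vecs 24 \<Longrightarrow> mukai_form (g x) (g y) = mukai_form x y"
    using g(1) unfolding mukai_isometry_def mukai_eq_mukai_form by auto
  have g_\<gamma>: "g \<gamma> = (\<lambda>i. \<gamma> i + z i + k * b i)"
    using g(3) by (simp add: fun_eq_iff zscale_def algebra_simps diff_eq_eq)
  define a where "a = mukai_form x b"
  define x' where "x' = (\<lambda>i. x i + a * \<gamma> i)"
  have x'_vecs: "x' \<in> vecs 24"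
    using x \<gamma>(1) by (simp add: x'_def vecs_def)
  have "mukai_form x' b = 0"
    unfolding x'_def by (simp add: mukai_form_bilinear \<gamma>(2) a_def)
  then obtain m where "g x' - x' = zscale m b"
    using g(2) x'_vecs unfolding trivial_on_k3_def mukai_eq_mukai_form by blast
  then have g_x': "g x' = (\<lambda>i. x' i + m * b i)"
    by (simp add: fun_eq_iff zscale_def algebra_simps diff_eq_eq)
  have "g x' = g x + zscale a (g \<gamma>)"
  proof -
    have "x' = x + zscale a \<gamma>" "zscale a \<gamma> \<in> vecs 24"
      using \<gamma>(1) by (simp_all add: x'_def zscale_def fun_eq_iff vecs_def)
    then show ?thesis
      using add x additive_zscale[OF add \<gamma>(1)] by simp
  qed
  then have g_x: "g x = (\<lambda>i. g x' i - a * g \<gamma> i)"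
    by (simp add: fun_eq_iff zscale_def)
  have b_sym: "mukai_form b \<gamma> = -1" "mukai_form b z = 0"
    using \<gamma>(2) bz(2) mukai_form_sym[of b] by simp_all
  have "mukai_form (g x') (g \<gamma>) = mukai_form x' \<gamma>"
    using iso x'_vecs \<gamma>(1) by blast
  then have m: "m = mukai_form x' z"
    unfolding g_x' g_\<gamma> using \<open>mukai_form x' b = 0\<close> b_sym bz(1)
    by (simp add: mukai_form_bilinear algebra_simps)
  have "mukai_form (g \<gamma>) (g \<gamma>) = mukai_form \<gamma> \<gamma>"
    using iso \<gamma>(1) by blast
  then have k: "k = mukai_form \<gamma> z + c"
    unfolding g_\<gamma> using \<gamma>(2) b_sym bz mukai_form_sym[of z \<gamma>]
    by (simp add: mukai_form_bilinear algebra_simps)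
  have "mukai_form x' z = mukai_form x z + a * mukai_form \<gamma> z"
    unfolding x'_def by (simp add: mukai_form_bilinear)
  then show ?thesis
    unfolding g_x g_x' g_\<gamma> m k eichler_def a_def[symmetric]
    by (simp add: x'_def fun_eq_iff algebra_simps)
qed

lemma mukai_form_unitv_left:
  assumes "i < 24"
  shows "mukai_form (unitv i) y = (\<Sum>j<24. mukai_gram i j * y j)"
proof -
  have "mukai_form (unitv i) y = (\<Sum>k<24. if k = i then \<Sum>j<24. mukai_gram i j * y j else 0)"
    unfolding mukai_form_def by (rule sum.cong) (auto simp: unitv_def)
  with assms show ?thesis by simp
qed

lemma sum_unitv_mukai_form:
  "(\<Sum>i<24. x i * real_of_int (mukai_form (unitv i) y)) = mukai_form x (\<lambda>j. real_of_int (y j))"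
proof -
  have "(\<Sum>i<24. x i * real_of_int (mukai_form (unitv i) y))
      = (\<Sum>i<24. x i * (\<Sum>j<24. real_of_int (mukai_gram i j) * real_of_int (y j)))"
    by (intro sum.cong refl) (simp add: mukai_form_unitv_left)
  also have "\<dots> = mukai_form x (\<lambda>j. real_of_int (y j))"
    by (simp add: mukai_form_def sum_distrib_left mult.assoc)
  finally show ?thesis .
qed

lemma realext_eichler:
  assumes "j < 24"
  shows "realext (eichler b z c) x j
           = eichler (\<lambda>i. real_of_int (b i)) (\<lambda>i. real_of_int (z i)) (real_of_int c) x j"
proof -
  have "(\<Sum>i<24. x i * real_of_int (unitv i j)) = x j"
    using assms unfolding unitv_def by (simp add: if_distrib cong: if_cong)
  then show ?thesis
    unfolding realext_def eichler_def sum_unitv_mukai_form[symmetric]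
    by (simp add: sum_distrib_left sum_distrib_right sum_subtractf sum.distrib algebra_simps)
qed

lemma orientation_preserving_eichler:
  fixes b z :: "nat \<Rightarrow> int"
  assumes bz: "mukai_form b b = 0" "mukai_form z b = 0" "mukai_form z z = 2 * c"
  shows "orientation_preserving (eichler b z c)"
  unfolding orientation_preserving_def
proof (intro allI impI)
  fix p :: "4 \<Rightarrow> nat \<Rightarrow> real"
  assume "(\<forall>a. p a \<in> vecsR 24) \<and>
    (\<forall>x :: real ^ 4. x \<noteq> 0 \<longrightarrow> (\<Sum>a\<in>UNIV. \<Sum>b\<in>UNIV. x $ a * x $ b * mukaiR (p a) (p b)) > 0)"
  then have pos_def: "\<And>x::real^4. x \<noteq> 0 \<Longrightarrow>
      (\<Sum>a\<in>UNIV. \<Sum>b\<in>UNIV. x $ a * x $ b * mukai_form (p a) (p b)) > 0"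
    unfolding mukaiR_eq_mukai_form by blast
  let ?b = "\<lambda>i. real_of_int (b i)" and ?z = "\<lambda>i. real_of_int (z i)"
  have "mukai_form ?b ?b = 0" "mukai_form ?z ?b = 0" "mukai_form ?z ?z = 2 * real_of_int c"
    using bz by (simp_all add: mukai_form_of_int)
  then have "det (\<chi> a a'. mukai_form (eichler ?b ?z (real_of_int c) (p a)) (p a')) > 0"
    using det_eichler_gram_pos[of p] pos_def by blast
  moreover have "mukaiR (realext (eichler b z c) (p a)) (p a')
      = mukai_form (eichler ?b ?z (real_of_int c) (p a)) (p a')" for a a'
    unfolding mukaiR_eq_mukai_form by (rule mukai_form_cong_left) (simp add: realext_eichler)
  ultimately show "det (\<chi> a a'. mukaiR (realext (eichler b z c) (p a)) (p a')) > 0"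
    by simp
qed

theorem lemma5p2:
  fixes n :: nat
    and \<iota> :: "(nat \<Rightarrow> int) \<Rightarrow> (nat \<Rightarrow> int)"
    and v \<alpha> \<gamma> z :: "nat \<Rightarrow> int"
  assumes "n \<ge> 2"
    and "primitive_embedding 23 (k3n_gram n) 24 mukai_gram \<iota>"
    and "v \<in> vecs 24"
    and "{y \<in> vecs 24. \<forall>x\<in>\<iota> ` vecs 23. mukai y x = 0} = range (\<lambda>k. zscale k v)"
    and "primitive_elem 23 \<alpha>" and "k3n n \<alpha> \<alpha> = 0"
    and "\<gamma> \<in> vecs 24" and "mukai \<gamma> (\<iota> \<alpha>) = -1" and "mukai \<gamma> \<gamma> = 0"
    and "z \<in> vecs 24" and "mukai z (\<iota> \<alpha>) = 0" and "mukai z v = 0"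
  shows "mukai_isometry (gtilde (\<iota> \<alpha>) z)
       \<and> gtilde (\<iota> \<alpha>) z (\<iota> \<alpha>) = \<iota> \<alpha>
       \<and> gtilde (\<iota> \<alpha>) z v = v
       \<and> trivial_on_k3 (\<iota> \<alpha>) (gtilde (\<iota> \<alpha>) z)
       \<and> (\<exists>k. gtilde (\<iota> \<alpha>) z \<gamma> - (\<gamma> + z) = zscale k (\<iota> \<alpha>))
       \<and> (\<forall>g. mukai_isometry g \<and> g (\<iota> \<alpha>) = \<iota> \<alpha> \<and> g v = v \<and> trivial_on_k3 (\<iota> \<alpha>) g
              \<and> (\<exists>k. g \<gamma> - (\<gamma> + z) = zscale k (\<iota> \<alpha>))
              \<longrightarrow> (\<forall>x\<in>vecs 24. g x = gtilde (\<iota> \<alpha>) z x))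
       \<and> orientation_preserving (gtilde (\<iota> \<alpha>) z)"
proof -
  define b where "b = \<iota> \<alpha>"
  define c where "c = mukai z z div 2"
  have "isometric_embedding 23 (k3n_gram n) 24 mukai_gram \<iota>" "\<alpha> \<in> vecs 23"
    using assms(2,5) unfolding primitive_embedding_def primitive_elem_def by blast+
  then have b_vecs: "b \<in> vecs 24" and "mukai b b = k3n n \<alpha> \<alpha>" and b_image: "b \<in> \<iota> ` vecs 23"
    unfolding isometric_embedding_def b_def by blast+
  have "v \<in> range (\<lambda>k. zscale k v)"
    using rangeI[of "\<lambda>k. zscale k v" 1] by (simp add: zscale_def)
  then have "mukai v b = 0"
    using assms(4) b_image by blast
  then have forms: "mukai_form b b = 0" "mukai_form z b = 0" "mukai_form v b = 0"
    "mukai_form v z = 0" "mukai_form \<gamma> b = -1"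
    using \<open>mukai b b = k3n n \<alpha> \<alpha>\<close> assms(6,8,11,12) mukai_form_sym[of v z]
    by (simp_all add: b_def mukai_eq_mukai_form)
  have zz: "mukai_form z z = 2 * c"
    using mukai_form_even[of z] by (simp add: c_def mukai_eq_mukai_form)
  have fixed: "eichler b z c b = b" "eichler b z c v = v"
    using forms mukai_form_sym[of b z] by (simp_all add: eichler_fixes)
  have unique: "\<forall>x\<in>vecs 24. g x = eichler b z c x"
    if "mukai_isometry g" "trivial_on_k3 b g" "g \<gamma> - (\<gamma> + z) = zscale k b" for g k
    using eichler_unique[OF that assms(7) forms(5,1,2) zz] by blast
  show ?thesis
    unfolding gtilde_eq_eichler c_def[symmetric] b_def[symmetric]
    using mukai_isometry_eichler[OF b_vecs assms(10) forms(1,2) zz] fixed trivial_on_k3_eichler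
      eichler_shift[OF forms(5)] unique orientation_preserving_eichler[OF forms(1,2) zz]
    by blast
qed

end
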